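(* For every positive integer $n$, $M(n,1)\le \frac{1}{n}\left(2^{n+1}-2\right)$.
   Context: A grain pattern of length $n$ is a subset $E\subseteq\{2,\dots,n\}$ containing no two consecutive integers. For such $E$, $\phi_E:\{0,1\}^n\to\{0,1\}^n$ sends $\mathbf{x}$ to $\mathbf{y}$ with $y_j=x_{j-1}$ if $j\in E$ and $y_j=x_j$ otherwise. $\Phi_t(\mathbf{x})=\{\phi_E(\mathbf{x}): E \text{ a grain pattern of length } n,\ |E|\le t\}$. A code $\mathcal{C}\subseteq\{0,1\}^n$ is $t$-grain-correcting if for any two distinct codewords $\mathbf{x}_1,\mathbf{x}_2$ one has $\Phi_t(\mathbf{x}_1)\cap\Phi_t(\mathbf{x}_2)=\emptyset$. $M(n,t)$ is the maximum cardinality of a $t$-grain-correcting code of length $n$. *)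

theory Defs
  imports Complex_Main
begin

text \<open>Binary words of length n are lists of booleans of length n; the word
  x = (x_1,...,x_n) is represented by the list whose entry at index j-1 is x_j.\<close>

definition words :: "nat \<Rightarrow> bool list set" where
  "words n = {x. length x = n}"

definition grain_pattern :: "nat \<Rightarrow> nat set \<Rightarrow> bool" where
  "grain_pattern n E \<longleftrightarrow> E \<subseteq> {2..n} \<and> (\<forall>j\<in>E. Suc j \<notin> E)"

text \<open>phi E x = y with y_j = x_(j-1) for j in E and y_j = x_j otherwise (1-indexed).\<close>
definition phi :: "nat set \<Rightarrow> bool list \<Rightarrow> bool list" where
  "phi E x = map (\<lambda>i. if Suc i \<in> E then x ! (i - 1) else x ! i) [0..<length x]"

definition Phi :: "nat \<Rightarrow> bool list \<Rightarrow> bool list set" where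
  "Phi t x = {phi E x | E. grain_pattern (length x) E \<and> card E \<le> t}"

definition grain_correcting :: "nat \<Rightarrow> nat \<Rightarrow> bool list set \<Rightarrow> bool" where
  "grain_correcting n t C \<longleftrightarrow> C \<subseteq> words n \<and>
     (\<forall>x1\<in>C. \<forall>x2\<in>C. x1 \<noteq> x2 \<longrightarrow> Phi t x1 \<inter> Phi t x2 = {})"

definition M :: "nat \<Rightarrow> nat \<Rightarrow> nat" where
  "M n t = Max (card ` {C. grain_correcting n t C})"

end

theory Submission imports Defs begin

text \<open>A local sphere-covering argument. Call the positions where a word changes value its
  boundaries. Shifting a single boundary one step to the right is a single grain error, so
  \<open>x\<close> has at least \<open>1 + b(x)\<close> distinct single-grain outputs, where \<open>b(x)\<close> counts boundaries;
  and no grain error creates a boundary, so every output \<open>y\<close> of \<open>x\<close> satisfies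
  \<open>b(y) \<le> b(x)\<close>. Giving every word \<open>y\<close> the weight \<open>1/(1 + b(y))\<close>, each codeword's output set
  carries weight at least 1, these sets are disjoint, and the total weight of all words of length
  \<open>n\<close> is \<open>2 \<Sum>\<^sub>k C(n-1,k)/(k+1) = (2\<^sup>n\<^sup>+\<^sup>1 - 2)/n\<close>.\<close>

lemma card_le_sum_weight_of_disjoint_subsets:
  fixes B :: "'a \<Rightarrow> 'b set" and w :: "'b \<Rightarrow> real"
  assumes "finite U"
    and subset: "\<forall>x\<in>C. B x \<subseteq> U"
    and nonempty: "\<forall>x\<in>C. B x \<noteq> {}"
    and disjoint: "\<forall>x\<in>C. \<forall>x'\<in>C. x \<noteq> x' \<longrightarrow> B x \<inter> B x' = {}"
    and weight: "\<forall>x\<in>C. \<forall>y\<in>B x. 1 / real (card (B x)) \<le> w y"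
    and nonneg: "\<forall>y\<in>U. 0 \<le> w y"
  shows "real (card C) \<le> sum w U"
proof (cases "finite C")
  case False
  then show ?thesis using nonneg by (simp add: sum_nonneg)
next
  case True
  have finB: "finite (B x)" if "x \<in> C" for x
    using subset that \<open>finite U\<close> finite_subset by blast
  have "real (card C) = (\<Sum>x\<in>C. \<Sum>y\<in>B x. 1 / real (card (B x)))"
    using finB nonempty by simp
  also have "\<dots> \<le> (\<Sum>x\<in>C. \<Sum>y\<in>B x. w y)"
    using weight by (intro sum_mono) auto
  also have "\<dots> = sum w (\<Union>x\<in>C. B x)"
    using True finB disjoint by (simp add: sum.UNION_disjoint)
  also have "\<dots> \<le> sum w U"
    using subset nonneg \<open>finite U\<close> by (intro sum_mono2) auto
  finally show ?thesis .
qed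

lemma finite_words: "finite (words n)"
  using finite_lists_length_eq[of "UNIV :: bool set" n] by (simp add: words_def)

lemma card_words: "card (words n) = 2 ^ n"
  using card_lists_length_eq[of "UNIV :: bool set" n] by (simp add: words_def)

lemma M_attained: "\<exists>C. grain_correcting n t C \<and> M n t = card C"
proof -
  let ?Cs = "{C. grain_correcting n t C}"
  have "finite ?Cs"
    by (rule finite_subset[of _ "Pow (words n)"]) (auto simp: grain_correcting_def finite_words)
  moreover have "{} \<in> ?Cs" by (simp add: grain_correcting_def)
  ultimately have "M n t \<in> card ` ?Cs" unfolding M_def by (intro Max_in) auto
  then show ?thesis by auto
qed

definition boundaries :: "bool list \<Rightarrow> nat set" where
  "boundaries x = {i. 0 < i \<and> i < length x \<and> x ! (i - 1) \<noteq> x ! i}"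

lemma finite_boundaries: "finite (boundaries x)"
  by (rule finite_subset[of _ "{..<length x}"]) (auto simp: boundaries_def)

lemma nth_Suc_by_boundaries:
  "Suc i < length x \<Longrightarrow> x ! Suc i = (if Suc i \<in> boundaries x then \<not> x ! i else x ! i)"
  by (auto simp: boundaries_def)

lemma phi_empty: "phi {} x = x"
  by (simp add: phi_def map_nth)

lemma length_phi: "length (phi E x) = length x"
  by (simp add: phi_def)

lemma phi_singleton:
  "0 < i \<Longrightarrow> i < length x \<Longrightarrow> phi {Suc i} x = x[i := x ! (i - 1)]"
  by (rule nth_equalityI) (auto simp: phi_def nth_list_update)

lemma Phi_subset_words: "Phi t x \<subseteq> words (length x)"
  by (auto simp: Phi_def words_def length_phi)

lemma finite_Phi: "finite (Phi t x)"
  using Phi_subset_words finite_words finite_subset by blast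

lemma self_in_Phi: "x \<in> Phi t x"
proof -
  have "grain_pattern (length x) {}" by (simp add: grain_pattern_def)
  then show ?thesis unfolding Phi_def using phi_empty[of x] by force
qed

lemma shift_boundary_in_Phi:
  assumes "i \<in> boundaries x"
  shows "x[i := x ! (i - 1)] \<in> Phi 1 x"
proof -
  have i: "0 < i" "i < length x" using assms by (auto simp: boundaries_def)
  then have "grain_pattern (length x) {Suc i}" by (simp add: grain_pattern_def)
  then show ?thesis unfolding Phi_def using phi_singleton[OF i] by force
qed

lemma card_Phi_ge: "Suc (card (boundaries x)) \<le> card (Phi 1 x)"
proof -
  let ?shift = "\<lambda>i. x[i := x ! (i - 1)]"
  have shift_at: "?shift i ! i \<noteq> x ! i" if "i \<in> boundaries x" for i
    using that by (simp add: boundaries_def)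
  have "inj_on ?shift (boundaries x)"
  proof (rule inj_onI)
    fix i j assume "i \<in> boundaries x" "j \<in> boundaries x" "?shift i = ?shift j"
    then show "i = j" using shift_at by (metis nth_list_update_neq)
  qed
  moreover have "x \<notin> ?shift ` boundaries x"
    using shift_at by fastforce
  ultimately have "card (insert x (?shift ` boundaries x)) = Suc (card (boundaries x))"
    by (simp add: card_image finite_boundaries)
  moreover have "insert x (?shift ` boundaries x) \<subseteq> Phi 1 x"
    using self_in_Phi shift_boundary_in_Phi by auto
  ultimately show ?thesis using card_mono[OF finite_Phi] by metis
qed

text \<open>Overwriting a boundary entry by its left neighbour removes the boundary at \<open>i\<close> and can
  create at most the one at \<open>i + 1\<close>.\<close>
lemma card_boundaries_shift_le:
  assumes i: "0 < i" "i < length x"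
  shows "card (boundaries (x[i := x ! (i - 1)])) \<le> card (boundaries x)"
proof (cases "i \<in> boundaries x")
  case False
  then have "x ! (i - 1) = x ! i" using i by (simp add: boundaries_def)
  then show ?thesis by simp
next
  case True
  let ?y = "x[i := x ! (i - 1)]"
  have "boundaries ?y \<subseteq> insert (Suc i) (boundaries x - {i})"
  proof
    fix k assume "k \<in> boundaries ?y"
    then have k: "0 < k" "k < length x" "?y ! (k - 1) \<noteq> ?y ! k"
      by (auto simp: boundaries_def)
    show "k \<in> insert (Suc i) (boundaries x - {i})"
    proof (cases "k = i \<or> k = Suc i")
      case True
      then show ?thesis using k i by (auto simp: nth_list_update)
    next
      case False
      then have "k - 1 \<noteq> i" using k by auto
      then show ?thesis using k False by (auto simp: boundaries_def nth_list_update)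
    qed
  qed
  then have "card (boundaries ?y) \<le> card (insert (Suc i) (boundaries x - {i}))"
    by (simp add: card_mono finite_boundaries)
  also have "\<dots> \<le> Suc (card (boundaries x - {i}))"
    by (simp add: card_insert_le_m1)
  also have "\<dots> = card (boundaries x)"
    using True by (metis card_Suc_Diff1 finite_boundaries)
  finally show ?thesis .
qed

lemma card_boundaries_Phi_le:
  assumes "y \<in> Phi 1 x"
  shows "card (boundaries y) \<le> card (boundaries x)"
proof -
  obtain E where E: "y = phi E x" "grain_pattern (length x) E" "card E \<le> 1"
    using assms by (auto simp: Phi_def)
  have "finite E" using E(2) by (auto simp: grain_pattern_def intro: finite_subset)
  then consider "E = {}" | j where "E = {j}"
    using E(3) by (metis One_nat_def card_0_eq card_1_singletonE le_Suc_eq le_zero_eq)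
  then show ?thesis
  proof cases
    case 1
    then show ?thesis using E(1) by (simp add: phi_empty)
  next
    case (2 j)
    then have "2 \<le> j" "j \<le> length x" using E(2) by (auto simp: grain_pattern_def)
    then obtain i where "j = Suc i" "0 < i" "i < length x"
      by (metis Suc_le_D Suc_le_lessD Suc_less_eq numeral_2_eq_2 zero_less_Suc less_Suc_eq_le)
    then show ?thesis
      using E(1) 2 phi_singleton card_boundaries_shift_le by simp
  qed
qed

lemma sum_binomial_div_Suc:
  "(\<Sum>k\<le>m. real (m choose k) / real (Suc k)) = (2 ^ Suc m - 1) / real (Suc m)"
proof -
  have absorb: "real (m choose k) / real (Suc k) = real (Suc m choose Suc k) / real (Suc m)" for k
  proof -
    have "real (Suc m) * real (m choose k) = real (Suc m choose Suc k) * real (Suc k)"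
      by (metis Suc_times_binomial_eq of_nat_mult)
    then show ?thesis by (simp add: field_simps)
  qed
  have "(2::real) ^ Suc m = (\<Sum>k\<le>Suc m. real (Suc m choose k))"
    by (metis choose_row_sum of_nat_numeral of_nat_power of_nat_sum)
  also have "\<dots> = 1 + (\<Sum>k\<le>m. real (Suc m choose Suc k))"
    by (subst sum.atMost_Suc_shift) (simp del: binomial_Suc_Suc)
  finally have "(\<Sum>k\<le>m. real (Suc m choose Suc k)) = 2 ^ Suc m - 1"
    by simp
  then show ?thesis
    by (simp only: absorb sum_divide_distrib[symmetric])
qed

lemma sum_Pow_inverse_Suc_card:
  assumes "finite A"
  shows "(\<Sum>S\<in>Pow A. 1 / real (Suc (card S))) = (2 ^ Suc (card A) - 1) / real (Suc (card A))"
proof -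
  have "(\<Sum>S\<in>Pow A. 1 / real (Suc (card S))) =
      (\<Sum>k\<le>card A. \<Sum>S\<in>{S \<in> Pow A. card S = k}. 1 / real (Suc (card S)))"
    by (rule sum.group[symmetric]) (auto simp: assms card_mono)
  also have "\<dots> = (\<Sum>k\<le>card A. real (card A choose k) / real (Suc k))"
  proof (rule sum.cong[OF refl])
    fix k
    have "{S \<in> Pow A. card S = k} = {S. S \<subseteq> A \<and> card S = k}" by auto
    then show "(\<Sum>S\<in>{S \<in> Pow A. card S = k}. 1 / real (Suc (card S))) =
        real (card A choose k) / real (Suc k)"
      using n_subsets[OF assms] by simp
  qed
  also have "\<dots> = (2 ^ Suc (card A) - 1) / real (Suc (card A))"
    by (rule sum_binomial_div_Suc)
  finally show ?thesis .
qed

lemma inj_on_hd_boundaries: "inj_on (\<lambda>y. (hd y, boundaries y)) (words n)"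
proof (rule inj_onI)
  fix y z assume "y \<in> words n" "z \<in> words n"
    and same: "(hd y, boundaries y) = (hd z, boundaries z)"
  then have len: "length y = n" "length z = n" by (auto simp: words_def)
  have "i < n \<longrightarrow> y ! i = z ! i" for i
  proof (induction i)
    case 0
    show ?case using same len by (cases y; cases z) auto
  next
    case (Suc i)
    then show ?case using same len nth_Suc_by_boundaries[of i y] nth_Suc_by_boundaries[of i z]
      by auto
  qed
  then show "y = z" using len by (auto intro: nth_equalityI)
qed

lemma hd_boundaries_image_words:
  assumes "n \<ge> 1"
  shows "(\<lambda>y. (hd y, boundaries y)) ` words n = UNIV \<times> Pow {1..<n}"
proof (rule card_subset_eq)
  show "finite ((UNIV :: bool set) \<times> Pow {1..<n})" by simp
  show "(\<lambda>y. (hd y, boundaries y)) ` words n \<subseteq> UNIV \<times> Pow {1..<n}"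
    by (auto simp: boundaries_def words_def)
  show "card ((\<lambda>y. (hd y, boundaries y)) ` words n) = card ((UNIV :: bool set) \<times> Pow {1..<n})"
    using assms by (simp add: card_image[OF inj_on_hd_boundaries] card_words card_cartesian_product
        card_Pow power_Suc[symmetric])
qed

lemma sum_words_inverse_Suc_boundaries:
  assumes "n \<ge> 1"
  shows "(\<Sum>y\<in>words n. 1 / real (Suc (card (boundaries y)))) = (2 ^ (n + 1) - 2) / real n"
proof -
  let ?g = "\<lambda>(b :: bool, S). 1 / real (Suc (card S))"
  have "(\<Sum>y\<in>words n. 1 / real (Suc (card (boundaries y)))) =
      sum ?g ((\<lambda>y. (hd y, boundaries y)) ` words n)"
    by (simp add: sum.reindex[OF inj_on_hd_boundaries])
  also have "\<dots> = sum ?g (UNIV \<times> Pow {1..<n})"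
    using hd_boundaries_image_words[OF assms] by simp
  also have "\<dots> = 2 * (\<Sum>S\<in>Pow {1..<n}. 1 / real (Suc (card S)))"
    by (simp add: sum.cartesian_product[symmetric] UNIV_bool)
  also have "\<dots> = 2 * ((2 ^ Suc (card {1..<n}) - 1) / real (Suc (card {1..<n})))"
    by (simp only: sum_Pow_inverse_Suc_card[OF finite_atLeastLessThan])
  also have "\<dots> = (2 ^ (n + 1) - 2) / real n"
    using assms by (simp add: of_nat_diff field_simps)
  finally show ?thesis .
qed

theorem corollary3p3:
  fixes n :: nat
  assumes "n \<ge> 1"
  shows "real (M n 1) \<le> ((2::real) ^ (n + 1) - 2) / real n"
proof -
  obtain C where C: "grain_correcting n 1 C" "M n 1 = card C"
    using M_attained by blast
  then have words: "\<forall>x\<in>C. Phi 1 x \<subseteq> words n"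
    using Phi_subset_words by (fastforce simp: grain_correcting_def words_def)
  have weight: "1 / real (card (Phi 1 x)) \<le> 1 / real (Suc (card (boundaries y)))"
    if "y \<in> Phi 1 x" for x y
  proof -
    have "real (Suc (card (boundaries y))) \<le> real (card (Phi 1 x))"
      using card_boundaries_Phi_le[OF that] card_Phi_ge[of x] by linarith
    then show ?thesis by (intro divide_left_mono) auto
  qed
  have disjoint: "\<forall>x\<in>C. \<forall>x'\<in>C. x \<noteq> x' \<longrightarrow> Phi 1 x \<inter> Phi 1 x' = {}"
    using C(1) by (simp add: grain_correcting_def)
  have "real (card C) \<le> (\<Sum>y\<in>words n. 1 / real (Suc (card (boundaries y))))"
  proof (rule card_le_sum_weight_of_disjoint_subsets[OF finite_words words _ disjoint])
    show "\<forall>x\<in>C. Phi 1 x \<noteq> {}" using self_in_Phi by blast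
    show "\<forall>x\<in>C. \<forall>y\<in>Phi 1 x. 1 / real (card (Phi 1 x)) \<le> 1 / real (Suc (card (boundaries y)))"
      using weight by blast
  qed simp
  then show ?thesis
    using C(2) sum_words_inverse_Suc_boundaries[OF assms] by simp
qed

end
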